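(* For one-sided matching with unit-sum valuations, the algorithm FirstPositionAdaptive (FPA) makes at most two value queries per agent and has distortion $O(n^{2/3}\sqrt{\log n})$.
   Context: One-sided matching: there is a set $N$ of $n$ agents and a set $A$ of $n$ items. Each agent $i$ has a valuation function $v_i:A\to\mathbb{R}_{\ge0}$ with $\sum_j v_i(j)=1$. Agents report strict rankings consistent with values (if $a\succ_i b$ then $v_i(a)\ge v_i(b)$), and value queries return $v_i(j)$. A matching is a bijection $N\to A$ with welfare $\sum_i v_i(y_i)$. Distortion is the supremum over unit-sum profiles of optimal welfare divided by the welfare of the output. Assume $n$ is such that $n^{1/3}$ and $\frac14 n^{1/3}$ are integers. "Position $\ell$" of agent $i$ refers to the $\ell$-th item in $\succ_i$. Algorithm FPA: - Query every agent $i$ for her top item $j_i^*$; let $v_i^*$ be its value. All agents start active. - Case 1: $\max_i v_i^*\ge n^{-1/3}$. For $\ell=1,\dots,n$ in order: while there exists a partial matching $Y_p$ of size at least $n^{1/3}/\sqrt{\log n}$ that matches active agents $i$ to distinct items $y_i$ which $i$ ranks at some position $\le\ell$, query each such $i$ for $y_i$ and make these agents inactive (ties broken arbitrarily). Then output a matching maximizing welfare with respect to the revealed values, where unqueried pairs count as $0$. - Case 2: $\max_i v_i^*<n^{-1/3}$. Query each agent $i$ for the item at position $n^{1/3}+1$; call its value $u_i$. Define $\tilde v_i(j_i^* )=v_i^*$, $\tilde v_i(j)=u_i$ for items at positions $2,\dots,n^{1/3}+1$, and $\tilde v_i(j)=0$ for items at positions $\ge n^{1/3}+2$. For every agent with $u_i<\frac12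 n^{-1}$, redefine $\tilde v_i(j)=\frac13 n^{-1/3}$ for items at positions $2,\dots,\frac14 n^{1/3}$. Output a matching maximizing $\sum_i\tilde v_i(y_i)$. *)

theory Defs
  imports Complex_Main
begin

text \<open>Agents and items are both the set {..<n}.  The ranking of agent i is given by
  pos i :: nat => nat, where pos i l is the item at position l (positions 1..n).\<close>

definition valid_profile :: "nat \<Rightarrow> (nat \<Rightarrow> nat \<Rightarrow> real) \<Rightarrow> (nat \<Rightarrow> nat \<Rightarrow> nat) \<Rightarrow> bool" where
  "valid_profile n v pos \<longleftrightarrow>
     (\<forall>i<n. bij_betw (pos i) {1..n} {..<n}
          \<and> (\<forall>j<n. v i j \<ge> 0)
          \<and> (\<Sum>j<n. v i j) = 1
          \<and> (\<forall>l l'. 1 \<le> l \<and> l < l' \<and> l' \<le> n \<longrightarrow> v i (pos i l') \<le> v i (pos i l)))"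

definition is_matching :: "nat \<Rightarrow> (nat \<Rightarrow> nat) \<Rightarrow> bool" where
  "is_matching n y \<longleftrightarrow> bij_betw y {..<n} {..<n}"

definition welfare :: "nat \<Rightarrow> (nat \<Rightarrow> nat \<Rightarrow> real) \<Rightarrow> (nat \<Rightarrow> nat) \<Rightarrow> real" where
  "welfare n w y = (\<Sum>i<n. w i (y i))"

definition maximizes :: "nat \<Rightarrow> (nat \<Rightarrow> nat \<Rightarrow> real) \<Rightarrow> (nat \<Rightarrow> nat) \<Rightarrow> bool" where
  "maximizes n w y \<longleftrightarrow> is_matching n y \<and> (\<forall>x. is_matching n x \<longrightarrow> welfare n w x \<le> welfare n w y)"

text \<open>Threshold n^(1/3)/sqrt(log n) on the size of partial matchings in Case 1 (m = n^(1/3)).\<close>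
definition fpa_k :: "nat \<Rightarrow> nat \<Rightarrow> real" where
  "fpa_k n m = real m / sqrt (log 2 (real n))"

definition fpa_pm :: "nat \<Rightarrow> nat \<Rightarrow> (nat \<Rightarrow> nat \<Rightarrow> nat) \<Rightarrow> nat \<Rightarrow> nat set \<Rightarrow> nat set \<Rightarrow> (nat \<Rightarrow> nat) \<Rightarrow> bool" where
  "fpa_pm n m pos l A S y \<longleftrightarrow>
     S \<subseteq> A \<and> inj_on y S \<and> (\<forall>i\<in>S. \<exists>p\<in>{1..l}. y i = pos i p) \<and> real (card S) \<ge> fpa_k n m"

text \<open>One step of Case 1. State: (current position l, active agents, queried pairs).\<close>
inductive fpa1_step :: "nat \<Rightarrow> nat \<Rightarrow> (nat \<Rightarrow> nat \<Rightarrow> nat)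
    \<Rightarrow> nat \<times> nat set \<times> (nat \<times> nat) set \<Rightarrow> nat \<times> nat set \<times> (nat \<times> nat) set \<Rightarrow> bool"
  for n m pos where
  match: "l \<le> n \<Longrightarrow> fpa_pm n m pos l A S y \<Longrightarrow>
     fpa1_step n m pos (l, A, R) (l, A - S, R \<union> (\<lambda>i. (i, y i)) ` S)"
| advance: "l \<le> n \<Longrightarrow> \<not> (\<exists>S y. fpa_pm n m pos l A S y) \<Longrightarrow>
     fpa1_step n m pos (l, A, R) (Suc l, A, R)"

definition fpa2_tilde_pos :: "nat \<Rightarrow> nat \<Rightarrow> (nat \<Rightarrow> nat \<Rightarrow> real) \<Rightarrow> (nat \<Rightarrow> nat \<Rightarrow> nat) \<Rightarrow> nat \<Rightarrow> nat \<Rightarrow> real" where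
  "fpa2_tilde_pos n m v pos i p =
     (let vstar = v i (pos i 1); u = v i (pos i (m + 1)) in
      if p = 1 then vstar
      else if u < 1 / (2 * real n) \<and> 2 \<le> p \<and> p \<le> m div 4 then 1 / (3 * real m)
      else if 2 \<le> p \<and> p \<le> m + 1 then u
      else 0)"

definition fpa2_tilde :: "nat \<Rightarrow> nat \<Rightarrow> (nat \<Rightarrow> nat \<Rightarrow> real) \<Rightarrow> (nat \<Rightarrow> nat \<Rightarrow> nat) \<Rightarrow> nat \<Rightarrow> nat \<Rightarrow> real" where
  "fpa2_tilde n m v pos i j = fpa2_tilde_pos n m v pos i (inv_into {1..n} (pos i) j)"

text \<open>FPA_run n m pos v Q y: some execution of FPA (with m = n^(1/3)) on the profile
  (v, pos) queries exactly the items Q i for agent i and outputs the matching y.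
  All tie-breaking choices are covered by quantifying over all executions.\<close>
definition FPA_run :: "nat \<Rightarrow> nat \<Rightarrow> (nat \<Rightarrow> nat \<Rightarrow> nat) \<Rightarrow> (nat \<Rightarrow> nat \<Rightarrow> real)
    \<Rightarrow> (nat \<Rightarrow> nat set) \<Rightarrow> (nat \<Rightarrow> nat) \<Rightarrow> bool" where
  "FPA_run n m pos v Q y \<longleftrightarrow>
    (if (\<exists>i<n. v i (pos i 1) \<ge> 1 / real m) then
       (\<exists>A R. (fpa1_step n m pos)\<^sup>*\<^sup>* (1, {..<n}, {(i, pos i 1) | i. i < n}) (Suc n, A, R)
           \<and> Q = (\<lambda>i. {j. (i, j) \<in> R})
           \<and> maximizes n (\<lambda>i j. if j \<in> Q i then v i j else 0) y)
     else
       Q = (\<lambda>i. {pos i 1, pos i (m + 1)})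
       \<and> maximizes n (fpa2_tilde n m v pos) y)"

end

theory Submission
  imports Defs "HOL-Analysis.Harmonic_Numbers"
begin

text \<open>Write \<open>m = n^(1/3)\<close> and \<open>k = m / \<surd>log n\<close>; let \<open>x\<close> be an optimal matching and \<open>W\<close> the
  welfare of the output.  In Case 1 some agent values her top item at least \<open>1/m\<close>, so \<open>W \<ge> 1/m\<close>,
  and every partial matching of queried pairs is worth at most \<open>W\<close>.  Follow an agent \<open>i\<close> whose item
  \<open>x i\<close> sits at position \<open>l\<close>.  If \<open>i\<close> is deactivated in a round at a position \<open>\<le> l\<close>, that round's
  matching gives her at least \<open>v i (x i)\<close>; there are at most \<open>n/k\<close> rounds, contributing \<open>(n/k) W\<close>.
  Otherwise the scan passes \<open>l\<close> with \<open>i\<close> active; fewer than \<open>k\<close> such agents exist per position,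
  each worth at most \<open>1/l\<close>, contributing \<open>k H\<^sub>n\<close>.  Both terms are \<open>O(m\<^sup>2 \<surd>log n) W\<close>.
  In Case 2 all top values are below \<open>1/m\<close>.  The surrogate values are at most \<open>4/3\<close> times the
  true ones, and the true ones are at most \<open>2m\<^sup>2\<close> times the surrogate ones plus a per-agent plateau
  term; since every agent has \<open>m/4 - 1\<close> items carrying her plateau value, a heavy partial matching
  into these items shows that the plateau terms sum to \<open>O(m\<^sup>2)\<close> times the surrogate optimum.\<close>

abbreviation rank :: "nat \<Rightarrow> (nat \<Rightarrow> nat \<Rightarrow> nat) \<Rightarrow> nat \<Rightarrow> nat \<Rightarrow> nat" where
  "rank n pos i j \<equiv> inv_into {1..n} (pos i) j"

section \<open>Valuation profiles\<close>

context
  fixes n :: nat and v :: "nat \<Rightarrow> nat \<Rightarrow> real" and pos :: "nat \<Rightarrow> nat \<Rightarrow> nat"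
  assumes profile: "valid_profile n v pos"
begin

lemma ranking_bij: "i < n \<Longrightarrow> bij_betw (pos i) {1..n} {..<n}"
  using profile unfolding valid_profile_def by blast

lemma value_nonneg: "i < n \<Longrightarrow> j < n \<Longrightarrow> 0 \<le> v i j"
  using profile unfolding valid_profile_def by blast

lemma value_sum: "i < n \<Longrightarrow> (\<Sum>j<n. v i j) = 1"
  using profile unfolding valid_profile_def by blast

lemma value_antimono:
  "i < n \<Longrightarrow> 1 \<le> l \<Longrightarrow> l \<le> l' \<Longrightarrow> l' \<le> n \<Longrightarrow> v i (pos i l') \<le> v i (pos i l)"
  using profile unfolding valid_profile_def by (cases "l = l'") auto

lemma pos_less: "i < n \<Longrightarrow> 1 \<le> p \<Longrightarrow> p \<le> n \<Longrightarrow> pos i p < n"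
  using ranking_bij[of i] unfolding bij_betw_def by auto

lemma rank_pos: "i < n \<Longrightarrow> 1 \<le> p \<Longrightarrow> p \<le> n \<Longrightarrow> rank n pos i (pos i p) = p"
  using ranking_bij[of i] unfolding bij_betw_def by (auto intro: inv_into_f_f)

lemma pos_rank: "i < n \<Longrightarrow> j < n \<Longrightarrow> pos i (rank n pos i j) = j"
  using ranking_bij[of i] unfolding bij_betw_def by (metis f_inv_into_f lessThan_iff)

lemma rank_bounds: "i < n \<Longrightarrow> j < n \<Longrightarrow> 1 \<le> rank n pos i j \<and> rank n pos i j \<le> n"
  using ranking_bij[of i] unfolding bij_betw_def
  by (metis atLeastAtMost_iff inv_into_into lessThan_iff)

lemma value_at_pos_nonneg: "i < n \<Longrightarrow> 1 \<le> p \<Longrightarrow> p \<le> n \<Longrightarrow> 0 \<le> v i (pos i p)"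
  using pos_less value_nonneg by blast

lemma sum_values_over_positions: "i < n \<Longrightarrow> (\<Sum>p=1..n. v i (pos i p)) = 1"
  using sum.reindex_bij_betw[OF ranking_bij, of i "v i"] value_sum[of i] by simp

lemma value_at_pos_le_inverse:
  assumes i: "i < n" and p: "1 \<le> p" "p \<le> n"
  shows "v i (pos i p) \<le> 1 / real p"
proof -
  have "real p * v i (pos i p) = (\<Sum>q=1..p. v i (pos i p))" by simp
  also have "\<dots> \<le> (\<Sum>q=1..p. v i (pos i q))"
    by (rule sum_mono) (use value_antimono[OF i] p in auto)
  also have "\<dots> \<le> (\<Sum>q=1..n. v i (pos i q))"
    by (rule sum_mono2) (use p value_at_pos_nonneg[OF i] in auto)
  also have "\<dots> = 1" using sum_values_over_positions[OF i] .
  finally show ?thesis using p by (simp add: field_simps)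
qed

end

section \<open>Matchings\<close>

lemma is_matching_less: "is_matching n x \<Longrightarrow> i < n \<Longrightarrow> x i < n"
  unfolding is_matching_def bij_betw_def by auto

lemma partial_matching_extends:
  assumes S: "S \<subseteq> {..<n}" and inj: "inj_on z S" and zS: "z ` S \<subseteq> {..<n}"
  obtains x where "is_matching n x" "\<And>i. i \<in> S \<Longrightarrow> x i = z i"
proof -
  have fS: "finite S" using S by (rule finite_subset) simp
  have "card ({..<n} - S) = card ({..<n} - z ` S)"
    using S zS inj fS by (simp add: card_Diff_subset card_image)
  then obtain h where h: "bij_betw h ({..<n} - S) ({..<n} - z ` S)"
    by (meson finite_same_card_bij finite_Diff finite_lessThan)
  define x where "x i = (if i \<in> S then z i else h i)" for i
  have b1: "bij_betw x S (z ` S)"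
    using inj unfolding bij_betw_def inj_on_def x_def by auto
  have b2: "bij_betw x ({..<n} - S) ({..<n} - z ` S)"
    using h bij_betw_cong[of "{..<n} - S" x h] unfolding x_def by auto
  have "bij_betw x (S \<union> ({..<n} - S)) (z ` S \<union> ({..<n} - z ` S))"
    by (rule bij_betw_combine[OF b1 b2]) auto
  moreover have "S \<union> ({..<n} - S) = {..<n}" "z ` S \<union> ({..<n} - z ` S) = {..<n}"
    using S zS by auto
  ultimately have "is_matching n x" unfolding is_matching_def by simp
  then show thesis by (rule that) (simp add: x_def)
qed

lemma partial_matching_le_max_welfare:
  assumes y: "maximizes n w y" and w: "\<And>i j. i < n \<Longrightarrow> j < n \<Longrightarrow> 0 \<le> w i j"
    and S: "S \<subseteq> {..<n}" and inj: "inj_on z S" and zS: "z ` S \<subseteq> {..<n}"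
  shows "(\<Sum>i\<in>S. w i (z i)) \<le> welfare n w y"
proof -
  obtain x where x: "is_matching n x" "\<And>i. i \<in> S \<Longrightarrow> x i = z i"
    using partial_matching_extends[OF S inj zS] by blast
  have "(\<Sum>i\<in>S. w i (z i)) = (\<Sum>i\<in>S. w i (x i))" using x(2) by simp
  also have "\<dots> \<le> (\<Sum>i<n. w i (x i))"
    by (rule sum_mono2) (use S x(1) in \<open>auto simp: is_matching_def bij_betw_def intro!: w\<close>)
  also have "\<dots> \<le> welfare n w y"
    using y x(1) unfolding maximizes_def welfare_def by blast
  finally show ?thesis .
qed

lemma welfare_nonneg:
  "is_matching n y \<Longrightarrow> (\<And>i j. i < n \<Longrightarrow> j < n \<Longrightarrow> 0 \<le> w i j) \<Longrightarrow> 0 \<le> welfare n w y"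
  unfolding welfare_def is_matching_def bij_betw_def by (auto intro!: sum_nonneg)

lemma welfare_mono:
  "is_matching n y \<Longrightarrow> (\<And>i j. i < n \<Longrightarrow> j < n \<Longrightarrow> w i j \<le> w' i j)
    \<Longrightarrow> welfare n w y \<le> welfare n w' y"
  unfolding welfare_def is_matching_def bij_betw_def by (auto intro!: sum_mono)

section \<open>Case 1: rounds of large partial matchings\<close>

lemma sum_union_le:
  fixes f :: "'a \<Rightarrow> real"
  assumes "finite A" "finite B" "\<And>i. i \<in> A \<inter> B \<Longrightarrow> 0 \<le> f i"
  shows "(\<Sum>i\<in>A \<union> B. f i) \<le> (\<Sum>i\<in>A. f i) + (\<Sum>i\<in>B. f i)"
  using sum_Un[OF assms(1,2), of f] sum_nonneg[of "A \<inter> B" f] assms(3) by simp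

lemma harm_le_two_log2:
  assumes "2 \<le> n"
  shows "harm n \<le> 2 * log 2 (real n)"
proof -
  have "harm n \<le> 1 + ln (real n)"
    using euler_mascheroni_sequence_decreasing[of 1 n] assms by (simp add: harm_def)
  also have "ln (real n) \<le> log 2 (real n)"
  proof -
    have "0 \<le> ln (real n)" "0 < ln (2::real)" "ln (2::real) \<le> 1"
      using assms ln_le_minus_one[of 2] by auto
    then show ?thesis unfolding log_def by (simp add: le_divide_eq mult_left_le)
  qed
  also have "1 \<le> log 2 (real n)" using assms by simp
  finally show ?thesis by simp
qed

abbreviation fpa1_start :: "nat \<Rightarrow> (nat \<Rightarrow> nat \<Rightarrow> nat) \<Rightarrow> nat \<times> nat set \<times> (nat \<times> nat) set" where
  "fpa1_start n pos \<equiv> (1, {..<n}, {(i, pos i 1) | i. i < n})"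

lemma fpa1_step_queries_mono: "fpa1_step n m pos s t \<Longrightarrow> snd (snd s) \<subseteq> snd (snd t)"
  by (induction rule: fpa1_step.induct) auto

lemma fpa1_run_queries_mono: "(fpa1_step n m pos)\<^sup>*\<^sup>* s t \<Longrightarrow> snd (snd s) \<subseteq> snd (snd t)"
  by (induction rule: rtranclp_induct) (auto dest: fpa1_step_queries_mono)

definition fpa1_query_invariant ::
    "nat \<Rightarrow> (nat \<Rightarrow> nat \<Rightarrow> nat) \<Rightarrow> nat \<times> nat set \<times> (nat \<times> nat) set \<Rightarrow> bool" where
  "fpa1_query_invariant n pos s \<longleftrightarrow> (case s of (l, A, R) \<Rightarrow>
     A \<subseteq> {..<n} \<and> R \<subseteq> {..<n} \<times> {..<n} \<and> (\<forall>i\<in>A. {j. (i, j) \<in> R} \<subseteq> {pos i 1})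
     \<and> (\<forall>i. card {j. (i, j) \<in> R} \<le> 2))"

lemma fpa1_query_invariant_start:
  assumes "valid_profile n v pos"
  shows "fpa1_query_invariant n pos (fpa1_start n pos)"
proof -
  have "{j. (i, j) \<in> {(i, pos i 1) | i. i < n}} = (if i < n then {pos i 1} else {})" for i
    by auto
  then show ?thesis
    unfolding fpa1_query_invariant_def using pos_less[OF assms] by auto
qed

lemma fpa1_query_invariant_step:
  assumes profile: "valid_profile n v pos" and step: "fpa1_step n m pos s t"
    and inv: "fpa1_query_invariant n pos s"
  shows "fpa1_query_invariant n pos t"
  using step inv
proof (induction rule: fpa1_step.induct)
  case (match l A S y R)
  have SA: "S \<subseteq> A" and yS: "\<forall>i\<in>S. \<exists>p\<in>{1..l}. y i = pos i p"
    using match(2) unfolding fpa_pm_def by auto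
  have A: "A \<subseteq> {..<n}" and R: "R \<subseteq> {..<n} \<times> {..<n}"
    and RA: "\<forall>i\<in>A. {j. (i, j) \<in> R} \<subseteq> {pos i 1}" and card_R: "\<forall>i. card {j. (i, j) \<in> R} \<le> 2"
    using match(3) unfolding fpa1_query_invariant_def by auto
  have y_less: "y i < n" if "i \<in> S" for i
    using yS that SA A match(1) pos_less[OF profile] by fastforce
  let ?R' = "R \<union> (\<lambda>i. (i, y i)) ` S"
  have slice: "{j. (i, j) \<in> ?R'} = {j. (i, j) \<in> R} \<union> (if i \<in> S then {y i} else {})" for i
    by auto
  have "card {j. (i, j) \<in> ?R'} \<le> 2" for i
  proof (cases "i \<in> S")
    case True
    then have "{j. (i, j) \<in> ?R'} \<subseteq> {pos i 1, y i}" using RA SA slice by auto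
    then have "card {j. (i, j) \<in> ?R'} \<le> card {pos i 1, y i}" by (intro card_mono) auto
    also have "\<dots> \<le> 2" by (simp add: card_insert_if)
    finally show ?thesis .
  qed (use slice card_R in simp)
  moreover have "?R' \<subseteq> {..<n} \<times> {..<n}" using R y_less SA A by auto
  ultimately show ?case unfolding fpa1_query_invariant_def using A RA slice by auto
qed (auto simp: fpa1_query_invariant_def)

lemma fpa1_query_invariant_run:
  assumes "valid_profile n v pos" and "(fpa1_step n m pos)\<^sup>*\<^sup>* (fpa1_start n pos) t"
  shows "fpa1_query_invariant n pos t"
  using assms(2)
proof (induction rule: rtranclp_induct)
  case base
  show ?case by (rule fpa1_query_invariant_start[OF assms(1)])
next
  case (step s t)
  then show ?case using fpa1_query_invariant_step[OF assms(1)] by blast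
qed

lemma fpa1_queried_partial_matching_le:
  assumes profile: "valid_profile n v pos"
    and run: "(fpa1_step n m pos)\<^sup>*\<^sup>* (fpa1_start n pos) (l, A, R)"
    and y: "maximizes n (\<lambda>i j. if (i, j) \<in> R then v i j else 0) y"
    and S: "S \<subseteq> {..<n}" and inj: "inj_on z S" and queried: "\<forall>i\<in>S. (i, z i) \<in> R"
  shows "(\<Sum>i\<in>S. v i (z i)) \<le> welfare n v y"
proof -
  let ?w = "\<lambda>i j. if (i, j) \<in> R then v i j else 0"
  have "R \<subseteq> {..<n} \<times> {..<n}"
    using fpa1_query_invariant_run[OF profile run] unfolding fpa1_query_invariant_def by auto
  then have zS: "z ` S \<subseteq> {..<n}" using queried by auto
  have "(\<Sum>i\<in>S. v i (z i)) = (\<Sum>i\<in>S. ?w i (z i))" using queried by simp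
  also have "\<dots> \<le> welfare n ?w y"
    by (rule partial_matching_le_max_welfare[OF y _ S inj zS]) (use value_nonneg[OF profile] in auto)
  also have "\<dots> \<le> welfare n v y"
    using y value_nonneg[OF profile] unfolding maximizes_def by (intro welfare_mono) auto
  finally show ?thesis .
qed

text \<open>Invariant of Case 1 for a fixed matching \<open>x\<close> and a bound \<open>W\<close> on every partial matching of
  queried pairs: each agent is active with \<open>x i\<close> not yet reached by the scan position \<open>l\<close>, or in \<open>G\<close>,
  or in \<open>E\<close>.  Agents enter \<open>G\<close> when deactivated in one of the \<open>b\<close> rounds so far; each round removes
  at least \<open>k\<close> agents and gives each of them whose \<open>x i\<close> is not ranked above \<open>l\<close> at least \<open>v i (x i)\<close>.
  Agents enter \<open>E\<close> when the scan leaves the position \<open>l'\<close> of \<open>x i\<close> while they are active: fewer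
  than \<open>k\<close> per position, each worth at most \<open>1/l'\<close>.\<close>

definition fpa1_accounting :: "nat \<Rightarrow> nat \<Rightarrow> (nat \<Rightarrow> nat \<Rightarrow> nat) \<Rightarrow> (nat \<Rightarrow> nat \<Rightarrow> real)
    \<Rightarrow> (nat \<Rightarrow> nat) \<Rightarrow> real \<Rightarrow> nat \<times> nat set \<times> (nat \<times> nat) set \<Rightarrow> bool" where
  "fpa1_accounting n m pos v x W s \<longleftrightarrow> (case s of (l, A, R) \<Rightarrow>
     1 \<le> l \<and> l \<le> Suc n \<and> A \<subseteq> {..<n} \<and>
     (\<exists>G E (b::nat). G \<subseteq> {..<n} \<and> E \<subseteq> {..<n} \<and>
        (\<forall>i<n. (i \<in> A \<and> l \<le> rank n pos i (x i)) \<or> i \<in> G \<or> i \<in> E) \<and>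
        (\<Sum>i\<in>G. v i (x i)) \<le> real b * W \<and>
        real b * fpa_k n m \<le> real (card ({..<n} - A)) \<and>
        (\<Sum>i\<in>E. v i (x i)) \<le> fpa_k n m * harm (l - 1)))"

lemma fpa1_accountingI:
  assumes "1 \<le> l" "l \<le> Suc n" "A \<subseteq> {..<n}" "G \<subseteq> {..<n}" "E \<subseteq> {..<n}"
    "\<forall>i<n. (i \<in> A \<and> l \<le> rank n pos i (x i)) \<or> i \<in> G \<or> i \<in> E"
    "(\<Sum>i\<in>G. v i (x i)) \<le> real b * W"
    "real b * fpa_k n m \<le> real (card ({..<n} - A))"
    "(\<Sum>i\<in>E. v i (x i)) \<le> fpa_k n m * harm (l - 1)"
  shows "fpa1_accounting n m pos v x W (l, A, R)"
  unfolding fpa1_accounting_def using assms by blast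

lemma fpa1_accountingE:
  assumes "fpa1_accounting n m pos v x W (l, A, R)"
  obtains G E b where "1 \<le> l" "l \<le> Suc n" "A \<subseteq> {..<n}" "G \<subseteq> {..<n}" "E \<subseteq> {..<n}"
    "\<forall>i<n. (i \<in> A \<and> l \<le> rank n pos i (x i)) \<or> i \<in> G \<or> i \<in> E"
    "(\<Sum>i\<in>G. v i (x i)) \<le> real b * W"
    "real b * fpa_k n m \<le> real (card ({..<n} - A))"
    "(\<Sum>i\<in>E. v i (x i)) \<le> fpa_k n m * harm (l - 1)"
  using assms unfolding fpa1_accounting_def by blast

context
  fixes n m :: nat and v :: "nat \<Rightarrow> nat \<Rightarrow> real" and pos :: "nat \<Rightarrow> nat \<Rightarrow> nat" and x :: "nat \<Rightarrow> nat"
  assumes profile: "valid_profile n v pos" and x: "is_matching n x"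
begin

lemma optimal_value_nonneg: "i < n \<Longrightarrow> 0 \<le> v i (x i)"
  using value_nonneg[OF profile _ is_matching_less[OF x]] .

lemma optimal_rank: "i < n \<Longrightarrow> pos i (rank n pos i (x i)) = x i \<and> rank n pos i (x i) \<in> {1..n}"
  using pos_rank[OF profile _ is_matching_less[OF x]] rank_bounds[OF profile _ is_matching_less[OF x]]
  by simp

lemma fpa1_accounting_start: "fpa1_accounting n m pos v x W (fpa1_start n pos)"
  by (rule fpa1_accountingI[where G = "{}" and E = "{}" and b = 0])
    (use optimal_rank in \<open>auto simp: harm_def\<close>)

lemma fpa1_round_dominates:
  assumes S: "S \<subseteq> {..<n}" and "l \<le> n" and y: "\<forall>i\<in>S. \<exists>p\<in>{1..l}. y i = pos i p"
  shows "(\<Sum>i\<in>{i \<in> S. l \<le> rank n pos i (x i)}. v i (x i)) \<le> (\<Sum>i\<in>S. v i (y i))"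
proof -
  let ?S' = "{i \<in> S. l \<le> rank n pos i (x i)}"
  have fin: "finite S" using S finite_subset by auto
  have "v i (x i) \<le> v i (y i)" if i: "i \<in> ?S'" for i
  proof -
    have "i < n" using i S by auto
    moreover obtain p where "p \<in> {1..l}" "y i = pos i p" using y i by blast
    ultimately show ?thesis
      using value_antimono[OF profile, of i p "rank n pos i (x i)"] optimal_rank i by auto
  qed
  then have "(\<Sum>i\<in>?S'. v i (x i)) \<le> (\<Sum>i\<in>?S'. v i (y i))" by (rule sum_mono)
  also have "\<dots> \<le> (\<Sum>i\<in>S. v i (y i))"
  proof (rule sum_mono2[OF fin])
    fix i assume "i \<in> S - ?S'"
    then obtain p where "i < n" "p \<in> {1..l}" "y i = pos i p" using y S by blast
    then show "0 \<le> v i (y i)" using value_at_pos_nonneg[OF profile] \<open>l \<le> n\<close> by auto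
  qed auto
  finally show ?thesis .
qed

lemma fpa1_passed_agents_le:
  assumes A: "A \<subseteq> {..<n}" and "1 \<le> l" and no_pm: "\<not> (\<exists>S y. fpa_pm n m pos l A S y)"
  shows "(\<Sum>i\<in>{i \<in> A. rank n pos i (x i) = l}. v i (x i)) \<le> fpa_k n m / real l"
proof -
  let ?B = "{i \<in> A. rank n pos i (x i) = l}"
  have B_less: "?B \<subseteq> {..<n}" using A by auto
  have "inj_on x ?B"
    using x B_less unfolding is_matching_def bij_betw_def by (auto intro: inj_on_subset)
  moreover have "\<forall>i\<in>?B. \<exists>p\<in>{1..l}. x i = pos i p"
  proof
    fix i assume "i \<in> ?B"
    then have "i < n" "rank n pos i (x i) = l" using B_less by auto
    then show "\<exists>p\<in>{1..l}. x i = pos i p" using optimal_rank \<open>1 \<le> l\<close> by (intro bexI[of _ l]) auto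
  qed
  ultimately have "fpa_pm n m pos l A ?B x" if "fpa_k n m \<le> real (card ?B)"
    unfolding fpa_pm_def using that by blast
  then have card_B: "real (card ?B) < fpa_k n m" using no_pm by force
  have "(\<Sum>i\<in>?B. v i (x i)) \<le> (\<Sum>i\<in>?B. 1 / real l)"
  proof (rule sum_mono)
    fix i assume "i \<in> ?B"
    then have i: "i < n" "rank n pos i (x i) = l" using B_less by auto
    show "v i (x i) \<le> 1 / real l"
      using value_at_pos_le_inverse[OF profile i(1), of l] optimal_rank[OF i(1)] i(2) by auto
  qed
  also have "\<dots> \<le> fpa_k n m / real l" using card_B \<open>1 \<le> l\<close> by (simp add: divide_right_mono)
  finally show ?thesis .
qed

lemma fpa1_accounting_match:
  assumes acc: "fpa1_accounting n m pos v x W (l, A, R)" and "l \<le> n"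
    and pm: "fpa_pm n m pos l A S y" and worth: "(\<Sum>i\<in>S. v i (y i)) \<le> W"
  shows "fpa1_accounting n m pos v x W (l, A - S, R')"
proof -
  let ?k = "fpa_k n m"
  have SA: "S \<subseteq> A" and yS: "\<forall>i\<in>S. \<exists>p\<in>{1..l}. y i = pos i p" and card_S: "?k \<le> real (card S)"
    using pm unfolding fpa_pm_def by auto
  obtain G E b where l: "1 \<le> l" "l \<le> Suc n" and A: "A \<subseteq> {..<n}"
    and G: "G \<subseteq> {..<n}" and E: "E \<subseteq> {..<n}"
    and cover: "\<forall>i<n. (i \<in> A \<and> l \<le> rank n pos i (x i)) \<or> i \<in> G \<or> i \<in> E"
    and sum_G: "(\<Sum>i\<in>G. v i (x i)) \<le> real b * W"
    and rounds: "real b * ?k \<le> real (card ({..<n} - A))"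
    and sum_E: "(\<Sum>i\<in>E. v i (x i)) \<le> ?k * harm (l - 1)"
    using fpa1_accountingE[OF acc] by blast
  define S' where "S' = {i \<in> S. l \<le> rank n pos i (x i)}"
  have S_less: "S \<subseteq> {..<n}" using SA A by auto
  have "finite S" "finite G" using S_less G finite_subset by auto
  then have fin: "finite S'" "finite G" unfolding S'_def by auto
  have "(\<Sum>i\<in>G \<union> S'. v i (x i)) \<le> (\<Sum>i\<in>G. v i (x i)) + (\<Sum>i\<in>S'. v i (x i))"
    by (rule sum_union_le) (use fin G optimal_value_nonneg in auto)
  also have "\<dots> \<le> real (Suc b) * W"
    using sum_G fpa1_round_dominates[OF S_less \<open>l \<le> n\<close> yS] worth unfolding S'_def
    by (simp add: algebra_simps)
  finally have sum_G': "(\<Sum>i\<in>G \<union> S'. v i (x i)) \<le> real (Suc b) * W" .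
  have "{..<n} - (A - S) = ({..<n} - A) \<union> S" using SA A by auto
  moreover have "card (({..<n} - A) \<union> S) = card ({..<n} - A) + card S"
    by (rule card_Un_disjoint) (use S_less finite_subset SA in auto)
  ultimately have rounds': "real (Suc b) * ?k \<le> real (card ({..<n} - (A - S)))"
    using rounds card_S by (simp add: algebra_simps)
  have cover': "\<forall>i<n. (i \<in> A - S \<and> l \<le> rank n pos i (x i)) \<or> i \<in> G \<union> S' \<or> i \<in> E"
    using cover unfolding S'_def by auto
  have A': "A - S \<subseteq> {..<n}" and G': "G \<union> S' \<subseteq> {..<n}" using A G S_less unfolding S'_def by auto
  show ?thesis using l A' G' E cover' sum_G' rounds' sum_E by (rule fpa1_accountingI)
qed

lemma fpa1_accounting_advance:
  assumes acc: "fpa1_accounting n m pos v x W (l, A, R)" and "l \<le> n"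
    and no_pm: "\<not> (\<exists>S y. fpa_pm n m pos l A S y)"
  shows "fpa1_accounting n m pos v x W (Suc l, A, R)"
proof -
  let ?k = "fpa_k n m"
  obtain G E b where l: "1 \<le> l" "l \<le> Suc n" and A: "A \<subseteq> {..<n}"
    and G: "G \<subseteq> {..<n}" and E: "E \<subseteq> {..<n}"
    and cover: "\<forall>i<n. (i \<in> A \<and> l \<le> rank n pos i (x i)) \<or> i \<in> G \<or> i \<in> E"
    and sum_G: "(\<Sum>i\<in>G. v i (x i)) \<le> real b * W"
    and rounds: "real b * ?k \<le> real (card ({..<n} - A))"
    and sum_E: "(\<Sum>i\<in>E. v i (x i)) \<le> ?k * harm (l - 1)"
    using fpa1_accountingE[OF acc] by blast
  define B where "B = {i \<in> A. rank n pos i (x i) = l}"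
  have B_less: "B \<subseteq> {..<n}" using A unfolding B_def by auto
  have fin: "finite B" "finite E" using B_less E finite_subset by auto
  have "(\<Sum>i\<in>E \<union> B. v i (x i)) \<le> (\<Sum>i\<in>E. v i (x i)) + (\<Sum>i\<in>B. v i (x i))"
    by (rule sum_union_le) (use fin E optimal_value_nonneg in auto)
  also have "\<dots> \<le> ?k * (harm (l - 1) + 1 / real l)"
    using sum_E fpa1_passed_agents_le[OF A l(1) no_pm] unfolding B_def by (simp add: algebra_simps)
  also have "harm (l - 1) + 1 / real l = harm (Suc l - 1)"
    using harm_Suc[of "l - 1", where 'a = real] l by (simp add: inverse_eq_divide)
  finally have sum_E': "(\<Sum>i\<in>E \<union> B. v i (x i)) \<le> ?k * harm (Suc l - 1)" .
  have cover': "\<forall>i<n. (i \<in> A \<and> Suc l \<le> rank n pos i (x i)) \<or> i \<in> G \<or> i \<in> E \<union> B"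
  proof (intro allI impI)
    fix i assume "i < n"
    then consider "i \<in> A" "l \<le> rank n pos i (x i)" | "i \<in> G" | "i \<in> E" using cover by blast
    then show "(i \<in> A \<and> Suc l \<le> rank n pos i (x i)) \<or> i \<in> G \<or> i \<in> E \<union> B"
    proof cases
      case 1
      then show ?thesis unfolding B_def by (cases "rank n pos i (x i) = l") auto
    qed auto
  qed
  have l': "1 \<le> Suc l" "Suc l \<le> Suc n" and E': "E \<union> B \<subseteq> {..<n}" using assms(2) E B_less by auto
  show ?thesis using l' A G E' cover' sum_G rounds sum_E' by (rule fpa1_accountingI)
qed

lemma fpa1_accounting_step:
  assumes step: "fpa1_step n m pos s t" and acc: "fpa1_accounting n m pos v x W s"
    and queried: "snd (snd t) \<subseteq> R"
    and worth: "\<And>S y. S \<subseteq> {..<n} \<Longrightarrow> inj_on y S \<Longrightarrow> \<forall>i\<in>S. (i, y i) \<in> R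
      \<Longrightarrow> (\<Sum>i\<in>S. v i (y i)) \<le> W"
  shows "fpa1_accounting n m pos v x W t"
  using step acc queried
proof (induction rule: fpa1_step.induct)
  case (match l A S y R')
  have "S \<subseteq> {..<n}" using match(2,3) unfolding fpa_pm_def fpa1_accounting_def by auto
  moreover have "inj_on y S" "\<forall>i\<in>S. (i, y i) \<in> R" using match(2,4) unfolding fpa_pm_def by auto
  ultimately have "(\<Sum>i\<in>S. v i (y i)) \<le> W" by (rule worth)
  then show ?case by (rule fpa1_accounting_match[OF match(3,1,2)])
next
  case (advance l A R')
  then show ?case by (intro fpa1_accounting_advance) auto
qed

lemma fpa1_optimum_le:
  assumes run: "(fpa1_step n m pos)\<^sup>*\<^sup>* (fpa1_start n pos) (Suc n, A, R)"
    and worth: "\<And>S y. S \<subseteq> {..<n} \<Longrightarrow> inj_on y S \<Longrightarrow> \<forall>i\<in>S. (i, y i) \<in> R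
      \<Longrightarrow> (\<Sum>i\<in>S. v i (y i)) \<le> W"
    and W: "0 \<le> W" and k: "0 < fpa_k n m"
  shows "welfare n v x \<le> real n / fpa_k n m * W + fpa_k n m * harm n"
proof -
  let ?k = "fpa_k n m"
  have "snd (snd t) \<subseteq> R \<longrightarrow> fpa1_accounting n m pos v x W t"
    if "(fpa1_step n m pos)\<^sup>*\<^sup>* (fpa1_start n pos) t" for t
    using that
  proof (induction rule: rtranclp_induct)
    case (step s t)
    then show ?case
      using fpa1_accounting_step[OF _ _ _ worth] fpa1_step_queries_mono by blast
  qed (use fpa1_accounting_start in auto)
  then have "fpa1_accounting n m pos v x W (Suc n, A, R)" using run by simp
  then obtain G E b where G: "G \<subseteq> {..<n}" and E: "E \<subseteq> {..<n}"
    and cover: "\<forall>i<n. (i \<in> A \<and> Suc n \<le> rank n pos i (x i)) \<or> i \<in> G \<or> i \<in> E"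
    and sum_G: "(\<Sum>i\<in>G. v i (x i)) \<le> real b * W"
    and rounds: "real b * ?k \<le> real (card ({..<n} - A))"
    and sum_E: "(\<Sum>i\<in>E. v i (x i)) \<le> ?k * harm n"
    by (auto elim: fpa1_accountingE)
  have fin: "finite G" "finite E" using G E finite_subset by auto
  have covered: "{..<n} \<subseteq> G \<union> E" using cover optimal_rank by fastforce
  have "welfare n v x \<le> (\<Sum>i\<in>G \<union> E. v i (x i))"
    unfolding welfare_def by (rule sum_mono2) (use fin covered optimal_value_nonneg G E in auto)
  also have "\<dots> \<le> (\<Sum>i\<in>G. v i (x i)) + (\<Sum>i\<in>E. v i (x i))"
    by (rule sum_union_le) (use fin G optimal_value_nonneg in auto)
  also have "\<dots> \<le> real b * W + ?k * harm n" using sum_G sum_E by simp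
  also have "real b * W \<le> real n / ?k * W"
  proof (rule mult_right_mono[OF _ W])
    have "card ({..<n} - A) \<le> card {..<n}" by (rule card_mono) auto
    then have "real (card ({..<n} - A)) \<le> real n" by simp
    then show "real b \<le> real n / ?k" using rounds k by (simp add: field_simps)
  qed
  finally show ?thesis by simp
qed

end

lemma fpa1_distortion:
  assumes profile: "valid_profile n v pos" and n: "n = m ^ 3" and m: "2 \<le> m"
    and top: "i\<^sub>0 < n" "1 / real m \<le> v i\<^sub>0 (pos i\<^sub>0 1)"
    and run: "(fpa1_step n m pos)\<^sup>*\<^sup>* (fpa1_start n pos) (Suc n, A, R)"
    and y: "maximizes n (\<lambda>i j. if (i, j) \<in> R then v i j else 0) y"
    and x: "is_matching n x"
  shows "welfare n v x \<le> 3 * real m ^ 2 * sqrt (log 2 (real n)) * welfare n v y"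
proof -
  let ?W = "welfare n v y" and ?L = "log 2 (real n)" and ?k = "fpa_k n m"
  have "2 ^ 3 \<le> m ^ 3" using m by (rule power_mono) simp
  then have n2: "2 \<le> n" using n by simp
  then have L: "1 \<le> ?L" by simp
  have k: "?k = real m / sqrt ?L" unfolding fpa_k_def ..
  have m0: "0 < real m" using m by simp
  then have k0: "0 < ?k" using L unfolding k by simp
  have worth: "(\<Sum>i\<in>S. v i (z i)) \<le> ?W"
    if "S \<subseteq> {..<n}" "inj_on z S" "\<forall>i\<in>S. (i, z i) \<in> R" for S z
    using fpa1_queried_partial_matching_le[OF profile run y that] .
  have "(i\<^sub>0, pos i\<^sub>0 1) \<in> R" using fpa1_run_queries_mono[OF run] top(1) by auto
  then have "v i\<^sub>0 (pos i\<^sub>0 1) \<le> ?W" using worth[of "{i\<^sub>0}" "\<lambda>_. pos i\<^sub>0 1"] top(1) by simp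
  then have "real m * v i\<^sub>0 (pos i\<^sub>0 1) \<le> real m * ?W" using m0 by simp
  moreover have "1 \<le> real m * v i\<^sub>0 (pos i\<^sub>0 1)" using top(2) m0 by (simp add: field_simps)
  ultimately have W: "1 \<le> real m * ?W" by linarith
  have W0: "0 \<le> ?W"
    using y value_nonneg[OF profile] unfolding maximizes_def by (intro welfare_nonneg) auto
  have "welfare n v x \<le> real n / ?k * ?W + ?k * harm n"
    using fpa1_optimum_le[OF profile x run worth W0 k0] by blast
  also have "real n / ?k = real m ^ 2 * sqrt ?L"
  proof -
    have "real n = real m ^ 2 * real m" using n by (simp add: power3_eq_cube power2_eq_square)
    then show ?thesis unfolding k using m0 by simp
  qed
  also have "?k * harm n \<le> ?k * (2 * ?L)"
    using harm_le_two_log2[OF n2] k0 by simp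
  also have "?k * (2 * ?L) = 2 * real m * sqrt ?L"
    unfolding k using L by (simp add: field_simps real_sqrt_mult[symmetric])
  also have "\<dots> \<le> 2 * real m * sqrt ?L * (real m * ?W)"
    using mult_left_mono[OF W, of "2 * real m * sqrt ?L"] m0 L by simp
  finally show ?thesis by (simp add: power2_eq_square algebra_simps)
qed

section \<open>Heavy partial matchings\<close>

definition matching_within :: "'a set \<Rightarrow> 'b set \<Rightarrow> ('a \<Rightarrow> 'b set) \<Rightarrow> ('a \<times> 'b) set \<Rightarrow> bool" where
  "matching_within I J G M \<longleftrightarrow>
     M \<subseteq> I \<times> J \<and> (\<forall>p\<in>M. snd p \<in> G (fst p)) \<and> inj_on fst M \<and> inj_on snd M"

definition matching_weight :: "('a \<Rightarrow> real) \<Rightarrow> ('a \<times> 'b) set \<Rightarrow> real" where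
  "matching_weight t M = (\<Sum>p\<in>M. t (fst p))"

lemma max_weight_matching_exists:
  assumes "finite I" "finite J"
  obtains M where "matching_within I J G M"
    "\<And>M'. matching_within I J G M' \<Longrightarrow> matching_weight t M' \<le> matching_weight t M"
proof -
  let ?F = "{M. matching_within I J G M}"
  have "finite ?F"
    by (rule finite_subset[of _ "Pow (I \<times> J)"]) (use assms in \<open>auto simp: matching_within_def\<close>)
  moreover have "{} \<in> ?F" by (simp add: matching_within_def)
  ultimately have "Max (matching_weight t ` ?F) \<in> matching_weight t ` ?F" by (intro Max_in) auto
  then obtain M where M: "M \<in> ?F" "matching_weight t M = Max (matching_weight t ` ?F)" by auto
  show thesis
  proof (rule that)
    show "matching_within I J G M" using M(1) by simp
    show "matching_weight t M' \<le> matching_weight t M" if "matching_within I J G M'" for M'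
      unfolding M(2) using \<open>finite ?F\<close> that by (intro Max_ge) auto
  qed
qed

context
  fixes I :: "'a set" and J :: "'b set" and G :: "'a \<Rightarrow> 'b set" and t :: "'a \<Rightarrow> real"
    and M :: "('a \<times> 'b) set"
  assumes finite: "finite I" "finite J" and G: "\<And>i. i \<in> I \<Longrightarrow> G i \<subseteq> J"
    and M: "matching_within I J G M"
    and max: "\<And>M'. matching_within I J G M' \<Longrightarrow> matching_weight t M' \<le> matching_weight t M"
begin

lemma max_weight_matching_finite: "finite M"
  using M finite finite_subset[of M "I \<times> J"] unfolding matching_within_def by auto

text \<open>Otherwise adding \<open>(i, j)\<close>, or swapping it for the pair covering \<open>j\<close>, would increase the weight.\<close>

lemma max_weight_matching_blocks:
  assumes i: "i \<in> I" "i \<notin> fst ` M" "0 < t i" and j: "j \<in> G i"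
  shows "\<exists>p\<in>M. snd p = j \<and> t i \<le> t (fst p)"
proof (rule ccontr)
  assume blocked: "\<not> ?thesis"
  have M_sub: "M \<subseteq> I \<times> J" and M_G: "\<forall>p\<in>M. snd p \<in> G (fst p)"
    and inj: "inj_on fst M" "inj_on snd M"
    using M unfolding matching_within_def by auto
  have "j \<in> J" using G[OF i(1)] j by auto
  show False
  proof (cases "\<exists>p\<in>M. snd p = j")
    case False
    let ?M' = "insert (i, j) M"
    have "matching_within I J G ?M'"
      unfolding matching_within_def using M_sub M_G inj i j \<open>j \<in> J\<close> False
      by (auto simp: inj_on_def image_iff; metis prod.collapse)
    moreover have "matching_weight t ?M' = matching_weight t M + t i"
      unfolding matching_weight_def using max_weight_matching_finite i(2)
      by (subst sum.insert) (auto simp: image_iff)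
    ultimately show False using max i(3) by fastforce
  next
    case True
    then obtain p where p: "p \<in> M" "snd p = j" by blast
    then have "t (fst p) < t i" using blocked by auto
    let ?M' = "insert (i, j) (M - {p})"
    have unique: "q \<in> M \<Longrightarrow> snd q = j \<Longrightarrow> q = p" for q using inj(2) p unfolding inj_on_def by auto
    have "matching_within I J G ?M'"
      unfolding matching_within_def using M_sub M_G inj i j \<open>j \<in> J\<close> unique
      by (auto simp: inj_on_def image_iff; metis prod.collapse)
    moreover have "matching_weight t ?M' = matching_weight t M - t (fst p) + t i"
    proof -
      have "(i, j) \<notin> M - {p}" using i(2) by (auto simp: image_iff; metis fst_conv)
      then have "matching_weight t ?M' = t i + matching_weight t (M - {p})"
        unfolding matching_weight_def using max_weight_matching_finite by (subst sum.insert) auto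
      also have "matching_weight t (M - {p}) = matching_weight t M - t (fst p)"
        unfolding matching_weight_def using max_weight_matching_finite p(1) by (simp add: sum_diff1)
      finally show ?thesis by simp
    qed
    ultimately show False using max \<open>t (fst p) < t i\<close> by fastforce
  qed
qed

lemma max_weight_matching_unmatched_le:
  assumes i: "i \<in> I" "i \<notin> fst ` M" and g: "0 < g" "g \<le> card (G i)"
    and t: "\<And>i. i \<in> I \<Longrightarrow> 0 \<le> t i"
  shows "t i \<le> matching_weight t M / real g"
proof -
  have weight: "0 \<le> matching_weight t M"
    unfolding matching_weight_def using M t by (intro sum_nonneg) (auto simp: matching_within_def)
  show ?thesis
  proof (cases "0 < t i")
    case False
    then show ?thesis using weight by (simp add: not_less order_trans)
  next
    case True
    define owner where "owner j = (SOME p. p \<in> M \<and> snd p = j \<and> t i \<le> t (fst p))" for j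
    have owner: "owner j \<in> M \<and> snd (owner j) = j \<and> t i \<le> t (fst (owner j))" if "j \<in> G i" for j
      unfolding owner_def using someI_ex[OF max_weight_matching_blocks[OF i True that, unfolded Bex_def]] .
    then have "inj_on owner (G i)" unfolding inj_on_def by metis
    have "real g * t i \<le> real (card (G i)) * t i" using g True by (intro mult_right_mono) auto
    also have "\<dots> = (\<Sum>j\<in>G i. t i)" by simp
    also have "\<dots> \<le> (\<Sum>j\<in>G i. t (fst (owner j)))" using owner by (intro sum_mono) auto
    also have "\<dots> = (\<Sum>p\<in>owner ` G i. t (fst p))"
      using sum.reindex[OF \<open>inj_on owner (G i)\<close>, of "\<lambda>p. t (fst p)"] by simp
    also have "\<dots> \<le> matching_weight t M" unfolding matching_weight_def
      using max_weight_matching_finite owner M t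
      by (intro sum_mono2) (auto simp: matching_within_def)
    finally show ?thesis using g by (simp add: field_simps)
  qed
qed

end

lemma heavy_partial_matching_exists:
  fixes t :: "'a \<Rightarrow> real"
  assumes finite: "finite I" "finite J" and G: "\<And>i. i \<in> I \<Longrightarrow> G i \<subseteq> J"
    and g: "0 < g" "\<And>i. i \<in> I \<Longrightarrow> g \<le> card (G i)" and t: "\<And>i. i \<in> I \<Longrightarrow> 0 \<le> t i"
  obtains S z where "S \<subseteq> I" "inj_on z S" "\<And>i. i \<in> S \<Longrightarrow> z i \<in> G i"
    "(\<Sum>i\<in>I. t i) \<le> (1 + real (card I) / real g) * (\<Sum>i\<in>S. t i)"
proof -
  obtain M where M: "matching_within I J G M"
    and max: "\<And>M'. matching_within I J G M' \<Longrightarrow> matching_weight t M' \<le> matching_weight t M"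
    using max_weight_matching_exists[OF finite] by blast
  have M_sub: "M \<subseteq> I \<times> J" and M_G: "\<forall>p\<in>M. snd p \<in> G (fst p)"
    and inj: "inj_on fst M" "inj_on snd M"
    using M unfolding matching_within_def by auto
  let ?S = "fst ` M"
  define z where "z i = snd (inv_into M fst i)" for i
  have z: "(i, z i) \<in> M" if "i \<in> ?S" for i
    using that unfolding z_def by (metis f_inv_into_f inv_into_into prod.collapse)
  have "inj_on z ?S"
  proof (rule inj_onI)
    fix a b assume "a \<in> ?S" "b \<in> ?S" "z a = z b"
    then have "(a, z a) = (b, z b)" using z inj(2) unfolding inj_on_def by (metis snd_conv)
    then show "a = b" by simp
  qed
  moreover have "z i \<in> G i" if "i \<in> ?S" for i using z[OF that] M_G by force
  moreover have S: "?S \<subseteq> I" using M_sub by auto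
  moreover have "(\<Sum>i\<in>I. t i) \<le> (1 + real (card I) / real g) * (\<Sum>i\<in>?S. t i)"
  proof -
    have weight: "matching_weight t M = (\<Sum>i\<in>?S. t i)"
      unfolding matching_weight_def using sum.reindex[OF inj(1), of t] by simp
    have "(\<Sum>i\<in>I. t i) = (\<Sum>i\<in>?S. t i) + (\<Sum>i\<in>I - ?S. t i)"
      using finite S by (metis sum.subset_diff add.commute)
    also have "(\<Sum>i\<in>I - ?S. t i) \<le> (\<Sum>i\<in>I - ?S. matching_weight t M / real g)"
      using max_weight_matching_unmatched_le[OF finite G M max _ _ g(1) g(2) t] by (intro sum_mono) auto
    also have "\<dots> = real (card (I - ?S)) * (matching_weight t M / real g)" by simp
    also have "\<dots> \<le> real (card I) * (matching_weight t M / real g)"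
    proof (rule mult_right_mono)
      show "real (card (I - ?S)) \<le> real (card I)" using finite by (simp add: card_mono)
      show "0 \<le> matching_weight t M / real g"
        unfolding weight using S t by (intro divide_nonneg_nonneg sum_nonneg) auto
    qed
    finally show ?thesis unfolding weight by (simp add: algebra_simps)
  qed
  ultimately show thesis using that by blast
qed

section \<open>Case 2: surrogate values from two queries\<close>

definition fpa2_plateau :: "nat \<Rightarrow> nat \<Rightarrow> (nat \<Rightarrow> nat \<Rightarrow> real) \<Rightarrow> (nat \<Rightarrow> nat \<Rightarrow> nat) \<Rightarrow> nat \<Rightarrow> real" where
  "fpa2_plateau n m v pos i =
     (if v i (pos i (m + 1)) < 1 / (2 * real n) then 1 / (3 * real m) else v i (pos i (m + 1)))"

lemma fpa2_tilde_pos_top: "fpa2_tilde_pos n m v pos i 1 = v i (pos i 1)"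
  unfolding fpa2_tilde_pos_def by simp

lemma fpa2_tilde_pos_plateau:
  "2 \<le> p \<Longrightarrow> p \<le> m div 4 \<Longrightarrow> fpa2_tilde_pos n m v pos i p = fpa2_plateau n m v pos i"
  unfolding fpa2_tilde_pos_def fpa2_plateau_def by auto

lemma fpa2_tilde_pos_middle:
  "2 \<le> p \<Longrightarrow> m div 4 < p \<Longrightarrow> p \<le> m + 1 \<Longrightarrow> fpa2_tilde_pos n m v pos i p = v i (pos i (m + 1))"
  unfolding fpa2_tilde_pos_def by auto

lemma fpa2_tilde_pos_tail: "m + 1 < p \<Longrightarrow> fpa2_tilde_pos n m v pos i p = 0"
  unfolding fpa2_tilde_pos_def Let_def using div_le_dividend[of m 4] by auto

lemma fpa2_tilde_pos_not_low:
  "\<not> v i (pos i (m + 1)) < 1 / (2 * real n) \<Longrightarrow> 2 \<le> p \<Longrightarrow> p \<le> m + 1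
    \<Longrightarrow> fpa2_tilde_pos n m v pos i p = v i (pos i (m + 1))"
  unfolding fpa2_tilde_pos_def by auto

locale fpa2_instance =
  fixes n m :: nat and v :: "nat \<Rightarrow> nat \<Rightarrow> real" and pos :: "nat \<Rightarrow> nat \<Rightarrow> nat"
  assumes profile: "valid_profile n v pos" and cube: "n = m ^ 3" and m_ge_8: "8 \<le> m"
    and four_dvd: "4 dvd m" and top_small: "\<And>i. i < n \<Longrightarrow> v i (pos i 1) < 1 / real m"
begin

abbreviation plateau :: "nat \<Rightarrow> real" where "plateau \<equiv> fpa2_plateau n m v pos"
abbreviation tilde_pos :: "nat \<Rightarrow> nat \<Rightarrow> real" where "tilde_pos \<equiv> fpa2_tilde_pos n m v pos"
abbreviation tilde :: "nat \<Rightarrow> nat \<Rightarrow> real" where "tilde \<equiv> fpa2_tilde n m v pos"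
abbreviation low :: "nat \<Rightarrow> bool" where "low i \<equiv> v i (pos i (m + 1)) < 1 / (2 * real n)"

lemma m_pos: "0 < real m"
  using m_ge_8 by simp

lemma succ_m_less: "m + 1 < n"
proof -
  have "8 * 8 \<le> m * m" using m_ge_8 by (intro mult_le_mono) auto
  have "m + 1 < m * 64" using m_ge_8 by simp
  also have "\<dots> \<le> m * (m * m)" using \<open>8 * 8 \<le> m * m\<close> by simp
  finally show ?thesis unfolding cube by (simp add: power3_eq_cube mult.assoc)
qed

lemma quarter: "m = 4 * (m div 4)" "2 \<le> m div 4"
  using four_dvd m_ge_8 by auto

text \<open>Positions up to \<open>m/4\<close> carry less than \<open>1/4\<close> of the unit mass and positions beyond \<open>m + 1\<close>
  less than \<open>n \<cdot> 1/(2n) = 1/2\<close>, so the at most \<open>m\<close> positions from \<open>m/4 + 1\<close> to \<open>m + 1\<close>,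
  each worth at most the value at position \<open>m/4\<close>, carry at least \<open>1/4\<close>.\<close>

lemma quarter_value_ge:
  assumes i: "i < n" and "low i"
  shows "1 / (4 * real m) \<le> v i (pos i (m div 4))"
proof -
  let ?q = "m div 4" and ?f = "\<lambda>p. v i (pos i p)"
  have mono: "?f p' \<le> ?f p" if "1 \<le> p" "p \<le> p'" "p' \<le> n" for p p'
    using value_antimono[OF profile i that] .
  have "sum ?f {1..n} = sum ?f {1..?q} + sum ?f {?q+1..m+1} + sum ?f {m+2..n}"
    using sum.ub_add_nat[of 1 "m+1" ?f "n - (m+1)"] sum.ub_add_nat[of 1 ?q ?f "m + 1 - ?q"]
      succ_m_less quarter by simp
  moreover have "sum ?f {1..?q} \<le> real ?q * (1 / real m)"
    using sum_bounded_above[of "{1..?q}" ?f "1 / real m"] mono[of 1] top_small[OF i] quarter succ_m_less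
    by fastforce
  moreover have "sum ?f {?q+1..m+1} \<le> real (m + 1 - ?q) * ?f ?q"
    using sum_bounded_above[of "{?q+1..m+1}" ?f "?f ?q"] mono[of ?q] quarter succ_m_less by auto
  moreover have "sum ?f {m+2..n} \<le> real n * (1 / (2 * real n))"
  proof -
    have "sum ?f {m+2..n} \<le> real (card {m+2..n}) * ?f (m+1)"
      by (rule sum_bounded_above) (use mono[of "m+1"] in auto)
    also have "\<dots> \<le> real n * (1 / (2 * real n))"
      using assms(2) value_at_pos_nonneg[OF profile i, of "m+1"] succ_m_less
      by (intro mult_mono) auto
    finally show ?thesis .
  qed
  moreover have "real n * (1 / (2 * real n)) = 1/2" "real ?q * (1 / real m) = 1/4"
    using succ_m_less quarter m_pos by auto
  ultimately have "1/4 \<le> real (m + 1 - ?q) * ?f ?q"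
    using sum_values_over_positions[OF profile i] by linarith
  also have "\<dots> \<le> real m * ?f ?q"
    using quarter value_at_pos_nonneg[OF profile i, of ?q] succ_m_less by (intro mult_right_mono) auto
  finally show ?thesis using m_pos by (simp add: field_simps)
qed

lemma position_cases:
  assumes "1 \<le> p"
  obtains "p = 1" | "2 \<le> p" "p \<le> m div 4" | "2 \<le> p" "m div 4 < p" "p \<le> m + 1" | "m + 1 < p"
  using assms by linarith

lemma plateau_nonneg: "i < n \<Longrightarrow> 0 \<le> plateau i"
  unfolding fpa2_plateau_def using value_at_pos_nonneg[OF profile, of i "m + 1"] succ_m_less m_pos
  by auto

lemma tilde_pos_nonneg:
  assumes i: "i < n" and p: "1 \<le> p" "p \<le> n"
  shows "0 \<le> tilde_pos i p"
  using p(1)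
proof (cases rule: position_cases)
  case 1
  show ?thesis unfolding 1 fpa2_tilde_pos_top using value_at_pos_nonneg[OF profile i, of 1] p by simp
next
  case 2
  then show ?thesis using plateau_nonneg[OF i] by (simp add: fpa2_tilde_pos_plateau)
next
  case 3
  then show ?thesis
    using value_at_pos_nonneg[OF profile i, of "m + 1"] succ_m_less by (simp add: fpa2_tilde_pos_middle)
qed (simp add: fpa2_tilde_pos_tail)

lemma tilde_pos_le_value:
  assumes i: "i < n" and p: "1 \<le> p" "p \<le> n"
  shows "3/4 * tilde_pos i p \<le> v i (pos i p)"
proof -
  have below_succ_m: "v i (pos i (m + 1)) \<le> v i (pos i p)" if "p \<le> m + 1"
    using value_antimono[OF profile i p(1) that] succ_m_less by simp
  from p(1) show ?thesis
  proof (cases rule: position_cases)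
    case 1
    show ?thesis unfolding 1 fpa2_tilde_pos_top using value_at_pos_nonneg[OF profile i, of 1] p by simp
  next
    case 2
    show ?thesis
    proof (cases "low i")
      case True
      have "3/4 * (1 / (3 * real m)) = 1 / (4 * real m)" by simp
      also have "\<dots> \<le> v i (pos i (m div 4))" using quarter_value_ge[OF i True] .
      also have "\<dots> \<le> v i (pos i p)"
        using value_antimono[OF profile i p(1), of "m div 4"] 2 succ_m_less by simp
      finally show ?thesis using 2 True by (simp add: fpa2_tilde_pos_plateau fpa2_plateau_def)
    next
      case False
      then show ?thesis
        using 2 below_succ_m value_at_pos_nonneg[OF profile i, of "m + 1"] div_le_dividend[of m 4]
          succ_m_less
        by (simp add: fpa2_tilde_pos_plateau fpa2_plateau_def)
    qed
  next
    case 3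
    then show ?thesis using below_succ_m value_at_pos_nonneg[OF profile i, of "m + 1"] succ_m_less
      by (simp add: fpa2_tilde_pos_middle)
  next
    case 4
    then show ?thesis using value_at_pos_nonneg[OF profile i] p by (simp add: fpa2_tilde_pos_tail)
  qed
qed

lemma value_le_tilde_pos:
  assumes i: "i < n" and p: "1 \<le> p" "p \<le> n"
  shows "v i (pos i p) \<le> 2 * real m ^ 2 * tilde_pos i p + 3 * plateau i"
proof -
  have below_top: "v i (pos i p) < 1 / real m"
    using value_antimono[OF profile i _ p(1) p(2)] top_small[OF i] by fastforce
  have scaled: "0 \<le> 2 * real m ^ 2 * tilde_pos i p" using tilde_pos_nonneg[OF i p] by simp
  consider "p = 1" | "2 \<le> p" "low i" | "2 \<le> p" "\<not> low i" "p \<le> m + 1" | "\<not> low i" "m + 1 < p"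
    using p(1) by linarith
  then show ?thesis
  proof cases
    case 1
    have "(1::real) ^ 2 \<le> real m ^ 2" using m_ge_8 by (intro power_mono) auto
    then have "1 \<le> 2 * real m ^ 2" by simp
    then have "v i (pos i p) \<le> 2 * real m ^ 2 * v i (pos i p)"
      using value_at_pos_nonneg[OF profile i p] by (simp add: mult_le_cancel_right1)
    then show ?thesis unfolding 1 fpa2_tilde_pos_top using plateau_nonneg[OF i] by simp
  next
    case 2
    then have "3 * plateau i = 1 / real m" unfolding fpa2_plateau_def by simp
    then show ?thesis using below_top scaled by linarith
  next
    case 3
    have "1 / real m = 2 * real m ^ 2 * (1 / (2 * real n))"
      unfolding cube using m_pos by (simp add: power2_eq_square power3_eq_cube)
    also have "\<dots> \<le> 2 * real m ^ 2 * v i (pos i (m + 1))" using 3(2) by (intro mult_left_mono) auto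
    finally show ?thesis
      using 3 below_top plateau_nonneg[OF i] by (simp add: fpa2_tilde_pos_not_low)
  next
    case 4
    then have "v i (pos i p) \<le> plateau i"
      using value_antimono[OF profile i _ _ p(2), of "m + 1"] unfolding fpa2_plateau_def by simp
    then show ?thesis using scaled plateau_nonneg[OF i] by linarith
  qed
qed

lemma tilde_at_rank: "tilde i j = tilde_pos i (rank n pos i j)"
  unfolding fpa2_tilde_def ..

lemma tilde_nonneg: "i < n \<Longrightarrow> j < n \<Longrightarrow> 0 \<le> tilde i j"
  unfolding tilde_at_rank using tilde_pos_nonneg rank_bounds[OF profile] by blast

lemma tilde_le_value: "i < n \<Longrightarrow> j < n \<Longrightarrow> 3/4 * tilde i j \<le> v i j"
  unfolding tilde_at_rank using tilde_pos_le_value rank_bounds[OF profile] pos_rank[OF profile]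
  by metis

lemma value_le_tilde: "i < n \<Longrightarrow> j < n \<Longrightarrow> v i j \<le> 2 * real m ^ 2 * tilde i j + 3 * plateau i"
  unfolding tilde_at_rank using value_le_tilde_pos rank_bounds[OF profile] pos_rank[OF profile]
  by metis

lemma tilde_welfare_le:
  assumes "is_matching n y"
  shows "3/4 * welfare n tilde y \<le> welfare n v y"
proof -
  have "3/4 * welfare n tilde y = welfare n (\<lambda>i j. 3/4 * tilde i j) y"
    unfolding welfare_def by (simp add: sum_distrib_left)
  also have "\<dots> \<le> welfare n v y" using assms tilde_le_value by (rule welfare_mono)
  finally show ?thesis .
qed

lemma welfare_le_tilde_welfare:
  assumes "is_matching n x"
  shows "welfare n v x \<le> 2 * real m ^ 2 * welfare n tilde x + 3 * (\<Sum>i<n. plateau i)"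
proof -
  have "welfare n v x \<le> welfare n (\<lambda>i j. 2 * real m ^ 2 * tilde i j + 3 * plateau i) x"
    using assms value_le_tilde by (rule welfare_mono)
  also have "\<dots> = 2 * real m ^ 2 * welfare n tilde x + 3 * (\<Sum>i<n. plateau i)"
    unfolding welfare_def by (simp add: sum.distrib sum_distrib_left)
  finally show ?thesis .
qed

lemma plateau_partial_matching_le:
  assumes y: "maximizes n tilde y" and S: "S \<subseteq> {..<n}" and inj: "inj_on z S"
    and z: "\<And>i. i \<in> S \<Longrightarrow> z i \<in> pos i ` {2..m div 4}"
  shows "(\<Sum>i\<in>S. plateau i) \<le> welfare n tilde y"
proof -
  have z_pos: "rank n pos i (z i) \<in> {2..m div 4} \<and> z i < n" if i: "i \<in> S" for i
  proof -
    obtain p where "p \<in> {2..m div 4}" "z i = pos i p" using z[OF i] by blast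
    moreover have "i < n" using S i by auto
    ultimately show ?thesis using rank_pos[OF profile] pos_less[OF profile] quarter succ_m_less by auto
  qed
  have "(\<Sum>i\<in>S. plateau i) = (\<Sum>i\<in>S. tilde i (z i))"
    using z_pos by (intro sum.cong) (auto simp: tilde_at_rank fpa2_tilde_pos_plateau)
  also have "\<dots> \<le> welfare n tilde y"
    by (rule partial_matching_le_max_welfare[OF y tilde_nonneg S inj]) (use z_pos in auto)
  finally show ?thesis .
qed

text \<open>Every agent has \<open>m/4 - 1\<close> plateau items, all of surrogate value \<open>plateau i\<close>, so a heavy
  partial matching into plateau items recovers a \<open>1/(1 + n/(m/4 - 1))\<close> share of the plateau values.\<close>

lemma plateau_sum_le:
  assumes y: "maximizes n tilde y"
  shows "(\<Sum>i<n. plateau i) \<le> (1 + 8 * real m ^ 2) * welfare n tilde y"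
proof -
  let ?q = "m div 4" and ?T = "welfare n tilde y"
  define G where "G i = pos i ` {2..?q}" for i
  have card_G: "?q - 1 \<le> card (G i)" if "i < n" for i
  proof -
    have "inj_on (pos i) {2..?q}"
      using ranking_bij[OF profile that] quarter succ_m_less
      unfolding bij_betw_def by (auto intro: inj_on_subset)
    then show ?thesis unfolding G_def by (simp add: card_image)
  qed
  have G_items: "G i \<subseteq> {..<n}" if "i < n" for i
    unfolding G_def using pos_less[OF profile that] quarter succ_m_less by auto
  obtain S z where S: "S \<subseteq> {..<n}" and inj: "inj_on z S" and z: "\<And>i. i \<in> S \<Longrightarrow> z i \<in> G i"
    and heavy: "(\<Sum>i<n. plateau i) \<le> (1 + real n / real (?q - 1)) * (\<Sum>i\<in>S. plateau i)"
    using heavy_partial_matching_exists[of "{..<n}" "{..<n}" G "?q - 1" plateau]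
      G_items card_G plateau_nonneg quarter by auto
  have matched: "(\<Sum>i\<in>S. plateau i) \<le> ?T"
    using plateau_partial_matching_le[OF y S inj] z unfolding G_def by blast
  have "real n = real m ^ 2 * (4 * real ?q)"
    using cube quarter by (simp add: power2_eq_square power3_eq_cube)
  also have "\<dots> \<le> real m ^ 2 * (8 * real (?q - 1))" using quarter by simp
  finally have "real n / real (?q - 1) \<le> 8 * real m ^ 2" using quarter by (simp add: field_simps)
  moreover have "0 \<le> (\<Sum>i\<in>S. plateau i)" using plateau_nonneg S by (intro sum_nonneg) auto
  ultimately have "(1 + real n / real (?q - 1)) * (\<Sum>i\<in>S. plateau i) \<le> (1 + 8 * real m ^ 2) * ?T"
    using matched by (intro mult_mono) auto
  then show ?thesis using heavy by linarith
qed

lemma fpa2_distortion: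
  assumes y: "maximizes n tilde y" and x: "is_matching n x"
  shows "welfare n v x \<le> 36 * real m ^ 2 * welfare n v y"
proof -
  let ?T = "welfare n tilde y" and ?W = "welfare n v y"
  have y_matching: "is_matching n y" using y unfolding maximizes_def by blast
  have tilde_x: "welfare n tilde x \<le> ?T" using y x unfolding maximizes_def by blast
  have "welfare n v x \<le> 2 * real m ^ 2 * welfare n tilde x + 3 * (\<Sum>i<n. plateau i)"
    by (rule welfare_le_tilde_welfare[OF x])
  also have "\<dots> \<le> 2 * real m ^ 2 * ?T + 3 * (\<Sum>i<n. plateau i)"
    using tilde_x by (simp add: mult_left_mono)
  also have "\<dots> \<le> (26 * real m ^ 2 + 3) * ?T" using plateau_sum_le[OF y] by (simp add: algebra_simps)
  also have "\<dots> \<le> (26 * real m ^ 2 + 3) * (4/3 * ?W)"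
    using tilde_welfare_le[OF y_matching] by (intro mult_left_mono) auto
  also have "\<dots> \<le> 36 * real m ^ 2 * ?W"
  proof -
    have "(8::real) ^ 2 \<le> real m ^ 2" using m_ge_8 by (intro power_mono) auto
    then have "(26 * real m ^ 2 + 3) * (4/3) \<le> 36 * real m ^ 2" by simp
    moreover have "0 \<le> ?W" using y_matching value_nonneg[OF profile] by (rule welfare_nonneg)
    ultimately have "(26 * real m ^ 2 + 3) * (4/3) * ?W \<le> 36 * real m ^ 2 * ?W"
      by (rule mult_right_mono)
    then show ?thesis by (metis mult.assoc)
  qed
  finally show ?thesis .
qed

end

lemma fpa_queries_at_most_two:
  assumes profile: "valid_profile n v pos" and run: "FPA_run n m pos v Q y" and i: "i < n"
  shows "card (Q i) \<le> 2"
proof (cases "\<exists>i<n. 1 / real m \<le> v i (pos i 1)")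
  case True
  then obtain A R where run1: "(fpa1_step n m pos)\<^sup>*\<^sup>* (fpa1_start n pos) (Suc n, A, R)"
    and "Q = (\<lambda>i. {j. (i, j) \<in> R})"
    using run unfolding FPA_run_def by auto
  then show ?thesis
    using fpa1_query_invariant_run[OF profile run1] unfolding fpa1_query_invariant_def by auto
next
  case False
  then have "Q i = {pos i 1, pos i (m + 1)}" using run unfolding FPA_run_def by auto
  then show ?thesis by (simp add: card_insert_if)
qed

lemma fpa_distortion:
  assumes cube: "n = m ^ 3" and m: "4 dvd m" "8 \<le> m" and profile: "valid_profile n v pos"
    and run: "FPA_run n m pos v Q y" and x: "is_matching n x"
  shows "welfare n v x \<le> 36 * real m ^ 2 * sqrt (log 2 (real n)) * welfare n v y"
proof -
  let ?W = "welfare n v y" and ?s = "sqrt (log 2 (real n))"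
  have "is_matching n y" using run unfolding FPA_run_def maximizes_def by (auto split: if_splits)
  then have W: "0 \<le> ?W" using value_nonneg[OF profile] by (rule welfare_nonneg)
  have "2 ^ 3 \<le> m ^ 3" using m by (intro power_mono) auto
  then have "2 \<le> n" using cube by simp
  then have s: "1 \<le> ?s" by simp
  show ?thesis
  proof (cases "\<exists>i<n. 1 / real m \<le> v i (pos i 1)")
    case True
    then obtain i\<^sub>0 where top: "i\<^sub>0 < n" "1 / real m \<le> v i\<^sub>0 (pos i\<^sub>0 1)" by blast
    obtain A R where run1: "(fpa1_step n m pos)\<^sup>*\<^sup>* (fpa1_start n pos) (Suc n, A, R)"
      and y: "maximizes n (\<lambda>i j. if (i, j) \<in> R then v i j else 0) y"
      using run True unfolding FPA_run_def by auto
    have "welfare n v x \<le> 3 * real m ^ 2 * ?s * ?W"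
      using fpa1_distortion[OF profile cube _ top run1 y x] m by simp
    also have "\<dots> \<le> 36 * real m ^ 2 * ?s * ?W" using W s by (intro mult_right_mono) auto
    finally show ?thesis .
  next
    case False
    have "fpa2_instance n m v pos"
      by (rule fpa2_instance.intro) (use profile cube m False in \<open>auto simp: not_le\<close>)
    then have "welfare n v x \<le> 36 * real m ^ 2 * ?W"
      using fpa2_instance.fpa2_distortion[OF _ _ x] run False unfolding FPA_run_def by auto
    also have "\<dots> \<le> 36 * real m ^ 2 * ?s * ?W"
      using mult_right_mono[OF s, of "36 * real m ^ 2 * ?W"] W by (simp add: ac_simps)
    finally show ?thesis .
  qed
qed

lemma cube_powr_two_thirds: "real (m ^ 3) powr (2/3) = real m ^ 2"
proof (cases "m = 0")
  case False
  have "real (m ^ 3) = real m powr 3" using False by (simp add: powr_realpow)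
  then have "real (m ^ 3) powr (2/3) = (real m powr 3) powr (2/3)" by (simp only:)
  also have "\<dots> = real m powr (3 * (2/3))" by (rule powr_powr)
  also have "\<dots> = real m ^ 2" using False by (simp add: powr_realpow)
  finally show ?thesis .
qed simp

theorem theorem7:
  "\<exists>C N0. \<forall>n m v pos Q y.
     n = m ^ 3 \<and> 4 dvd m \<and> n \<ge> N0 \<and> valid_profile n v pos \<and> FPA_run n m pos v Q y \<longrightarrow>
       (\<forall>i<n. card (Q i) \<le> 2) \<and>
       (\<forall>x. is_matching n x \<longrightarrow>
          welfare n v x \<le> C * real n powr (2/3) * sqrt (log 2 (real n)) * welfare n v y)"
proof (intro exI[of _ "36::real"] exI[of _ "512::nat"] allI impI)
  fix n m v pos Q y
  assume "n = m ^ 3 \<and> 4 dvd m \<and> 512 \<le> n \<and> valid_profile n v pos \<and> FPA_run n m pos v Q y"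
  then have cube: "n = m ^ 3" and m4: "4 dvd m" and large: "512 \<le> n"
    and profile: "valid_profile n v pos" and run: "FPA_run n m pos v Q y" by auto
  have m8: "8 \<le> m"
  proof (rule ccontr)
    assume "\<not> 8 \<le> m"
    then have "m ^ 3 \<le> 7 ^ 3" by (intro power_mono) auto
    then show False using large cube by simp
  qed
  show "(\<forall>i<n. card (Q i) \<le> 2) \<and> (\<forall>x. is_matching n x \<longrightarrow>
      welfare n v x \<le> 36 * real n powr (2/3) * sqrt (log 2 (real n)) * welfare n v y)"
    using fpa_queries_at_most_two[OF profile run] fpa_distortion[OF cube m4 m8 profile run]
      cube_powr_two_thirds[of m] cube by simp
qed

end
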